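(* Let $X$ be a convex metric space over a Boolean ring $B$, $0\in X$, $R=\{x_{1},\ldots,x_{n}\}$ a referential of $(X,0)$, and $x\in X$. There is a unique tuple $(a_{1},\ldots,a_{n})\in B^{n}$ such that: (1) $a_{i}a_{j}=0$ whenever $i\neq j$; (2) $x=\sum_{i=1}^{n}a_{i}x_{i}$ (orthogonal combination); (3) $a_{i}\le |x_{i}|$ for $i=1,\ldots,n$.
   Context: $B$ is a Boolean ring ($a\vee b=a+b+ab$, $a\le b\iff ab=a$; $a_1\oplus\cdots\oplus a_n$ denotes a sum of pairwise disjoint elements). A Boolean metric space over $B$: set $X$ with $d:X\times X\to B$, $d(x,y)=0\iff x=y$, symmetric, $d(x,z)\le d(x,y)\vee d(y,z)$. For $y_1,\dots,y_m\in X$, $b_i\in B$ with $b_1\oplus\cdots\oplus b_m=1$, $y$ is a convex combination of the $y_i$ with coefficients $b_i$ if $b_id(y,y_i)=0$ for all $i$ (unique when it exists); $X$ is convex if all such combinations exist. In $(X,0)$: $|x|=d(0,x)$. For pairwise disjoint $a_1,\dots,a_n\in B$, the orthogonal combination $\sum_{i=1}^n a_ix_i$ denotes the convex combination of $0,x_1,\dots,x_n$ with coefficients $a_0,a_1,\dots,a_n$ where $a_0=1+a_1+\cdots+a_n$. $x\perp y$ iff $d(x,y)=|x|\vee|y|$; a finite $R\subseteq X$ is orthogonal if $0\notin R$ and distinct elements are orthogonal; a referential of $(X,0)$ is an orthogonal $R$ such that every element of $X$ is a convex combination of elements of $R\cup\{0\}$. *)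

theory Defs
  imports Main
begin

definition bleq :: "'b::comm_ring_1 \<Rightarrow> 'b \<Rightarrow> bool" where
  "bleq a b \<longleftrightarrow> a * b = a"

definition bjoin :: "'b::comm_ring_1 \<Rightarrow> 'b \<Rightarrow> 'b" where
  "bjoin a b = a + b + a * b"

definition pairwise_disj :: "'b::comm_ring_1 list \<Rightarrow> bool" where
  "pairwise_disj bs \<longleftrightarrow>
     (\<forall>i<length bs. \<forall>j<length bs. i \<noteq> j \<longrightarrow> bs ! i * bs ! j = 0)"

definition bool_metric :: "'x set \<Rightarrow> ('x \<Rightarrow> 'x \<Rightarrow> 'b::comm_ring_1) \<Rightarrow> bool" where
  "bool_metric X d \<longleftrightarrow>
     (\<forall>x\<in>X. \<forall>y\<in>X. d x y = 0 \<longleftrightarrow> x = y) \<and>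
     (\<forall>x\<in>X. \<forall>y\<in>X. d x y = d y x) \<and>
     (\<forall>x\<in>X. \<forall>y\<in>X. \<forall>z\<in>X. bleq (d x z) (bjoin (d x y) (d y z)))"

definition is_conv_comb :: "('x \<Rightarrow> 'x \<Rightarrow> 'b::comm_ring_1) \<Rightarrow> 'x \<Rightarrow> 'x list \<Rightarrow> 'b list \<Rightarrow> bool" where
  "is_conv_comb d y ys bs \<longleftrightarrow>
     length ys = length bs \<and> pairwise_disj bs \<and> sum_list bs = 1 \<and>
     (\<forall>i<length ys. bs ! i * d y (ys ! i) = 0)"

definition convex_bms :: "'x set \<Rightarrow> ('x \<Rightarrow> 'x \<Rightarrow> 'b::comm_ring_1) \<Rightarrow> bool" where
  "convex_bms X d \<longleftrightarrow>
     (\<forall>ys bs. set ys \<subseteq> X \<and> length ys = length bs \<and> pairwise_disj bs \<and> sum_list bs = 1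
        \<longrightarrow> (\<exists>y\<in>X. is_conv_comb d y ys bs))"

text \<open>Orthogonal combination: x = sum a_i x_i, i.e. x is the convex combination of
  0, x_1..x_n with coefficients 1 + a_1 + ... + a_n, a_1, ..., a_n.\<close>
definition orth_comb :: "('x \<Rightarrow> 'x \<Rightarrow> 'b::comm_ring_1) \<Rightarrow> 'x \<Rightarrow> 'x \<Rightarrow> 'x list \<Rightarrow> 'b list \<Rightarrow> bool" where
  "orth_comb d z x xs as \<longleftrightarrow>
     length xs = length as \<and> is_conv_comb d x (z # xs) ((1 + sum_list as) # as)"

definition bperp :: "('x \<Rightarrow> 'x \<Rightarrow> 'b::comm_ring_1) \<Rightarrow> 'x \<Rightarrow> 'x \<Rightarrow> 'x \<Rightarrow> bool" where
  "bperp d z x y \<longleftrightarrow> d x y = bjoin (d z x) (d z y)"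

definition referential :: "'x set \<Rightarrow> ('x \<Rightarrow> 'x \<Rightarrow> 'b::comm_ring_1) \<Rightarrow> 'x \<Rightarrow> 'x set \<Rightarrow> bool" where
  "referential X d z R \<longleftrightarrow>
     finite R \<and> R \<subseteq> X \<and> z \<notin> R \<and>
     (\<forall>x\<in>R. \<forall>y\<in>R. x \<noteq> y \<longrightarrow> bperp d z x y) \<and>
     (\<forall>x\<in>X. \<exists>ys bs. set ys \<subseteq> R \<union> {z} \<and> is_conv_comb d x ys bs)"

end

theory Submission
  imports Defs
begin

text \<open>
  Work in a Boolean ring B (a commutative ring with a * a = a, hence
  of characteristic 2).  By the referential property, x is a convex combination of
  some points of R \<union> {0}.  Regrouping the coefficients by point turns this into a
  convex combination of the list 0, x_1, ..., x_n with coefficients c_0, ..., c_n.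
  Cutting c_i down to a_i = c_i |x_i| gives the required orthogonal combination: the
  only nontrivial condition, (1 + \<Sum>a_i) d(x,0) = 0, follows from the triangle
  inequality since c_i d(x,x_i) = 0 forces c_i d(x,0) \<le> |x_i|.

  For uniqueness, let (a_i) and (b_i) both qualify.  The coefficients of the
  orthogonal combination for b form a partition of unity, and a_i is disjoint from
  every block except b_i: on a_i b_k (k \<noteq> i) both d(x,x_i) and d(x,x_k) vanish, hence
  so does d(x_i,x_k) = |x_i| \<or> |x_k| \<ge> |x_i| \<ge> a_i.  So a_i \<le> b_i, and by symmetry a_i = b_i.
\<close>

lemma idempotent_ring_add_self:
  fixes a :: "'b::comm_ring_1"
  assumes idem: "\<And>a::'b. a * a = a"
  shows "a + a = 0"
proof -
  have "(a + a) * (a + a) = (a * a + a * a) + (a * a + a * a)"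
    by (simp only: distrib_left distrib_right)
  then have "(a + a) + (a + a) = 0 + (a + a)"
    by (simp only: idem add_0_left)
  then show ?thesis by (rule add_right_imp_eq)
qed

lemma bjoin_absorb_below:
  fixes p a b :: "'b::comm_ring_1"
  assumes idem: "\<And>a::'b. a * a = a" and "bleq p a"
  shows "p * bjoin a b = p"
proof -
  have pa: "p * a = p" using assms(2) unfolding bleq_def .
  have "p * bjoin a b = p * a + (p * b + p * a * b)"
    unfolding bjoin_def by (simp add: algebra_simps)
  also have "\<dots> = p + (p * b + p * b)" using pa by simp
  finally show ?thesis using idempotent_ring_add_self[OF idem, of "p * b"] by simp
qed

lemma masked_triangle:
  fixes d :: "'x \<Rightarrow> 'x \<Rightarrow> 'b::comm_ring_1"
  assumes bm: "bool_metric X d" and "x \<in> X" "y \<in> X" "z \<in> X"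
    and cxy: "c * d x y = 0"
  shows "c * d x z = c * d x z * d y z"
proof -
  have tri: "d x z * (d x y + d y z + d x y * d y z) = d x z"
    using assms(1-4) unfolding bool_metric_def bleq_def bjoin_def by blast
  have "c * d x z = c * (d x z * (d x y + d y z + d x y * d y z))" using tri by simp
  also have "\<dots> = (c * d x y) * (d x z + d x z * d y z) + c * d x z * d y z"
    by (simp add: algebra_simps)
  finally show ?thesis using cxy by simp
qed

lemma masked_dist_zero:
  fixes d :: "'x \<Rightarrow> 'x \<Rightarrow> 'b::comm_ring_1"
  assumes bm: "bool_metric X d" and X: "x \<in> X" "u \<in> X" "v \<in> X"
    and cu: "c * d x u = 0" and cv: "c * d x v = 0"
  shows "c * d u v = 0"
proof -
  have "d x u = d u x" using bm X unfolding bool_metric_def by blast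
  then have "c * d u v = c * d u v * d x v"
    using masked_triangle[OF bm X(2,1,3)] cu by simp
  also have "\<dots> = d u v * (c * d x v)" by (simp add: algebra_simps)
  finally show ?thesis using cv by simp
qed

text \<open>Where c kills d(x,y), the part of c outside |y| also kills d(x,z):
  c (1 + d(z,y)) d(x,z) = 0.  This is how cutting coefficients down to the norm
  keeps the base-point condition of an orthogonal combination.\<close>
lemma masked_base_complement:
  fixes d :: "'x \<Rightarrow> 'x \<Rightarrow> 'b::comm_ring_1"
  assumes idem: "\<And>a::'b. a * a = a" and bm: "bool_metric X d"
    and X: "x \<in> X" "y \<in> X" "z \<in> X" and cxy: "c * d x y = 0"
  shows "c * (1 + d z y) * d x z = 0"
proof -
  have "d y z = d z y" using bm X unfolding bool_metric_def by blast
  then have "c * d x z = c * d x z * d z y"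
    using masked_triangle[OF bm X cxy] by simp
  then have "c * (1 + d z y) * d x z = c * d z y * d x z + c * d z y * d x z"
    by (simp add: algebra_simps)
  then show ?thesis using idempotent_ring_add_self[OF idem] by simp
qed

lemma referential_orthogonal_with_base:
  fixes d :: "'x \<Rightarrow> 'x \<Rightarrow> 'b::comm_ring_1"
  assumes bm: "bool_metric X d" and zX: "z \<in> X" and ref: "referential X d z R"
  shows "\<forall>u\<in>insert z R. \<forall>v\<in>insert z R. u \<noteq> v \<longrightarrow> bperp d z u v"
proof -
  have RX: "R \<subseteq> X" and orth: "\<forall>u\<in>R. \<forall>v\<in>R. u \<noteq> v \<longrightarrow> bperp d z u v"
    using ref unfolding referential_def by auto
  have zz: "d z z = 0" using bm zX unfolding bool_metric_def by blast
  have "bperp d z u z" "bperp d z z u" if "u \<in> R" for u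
  proof -
    have "d u z = d z u" using bm zX RX that unfolding bool_metric_def by blast
    then show "bperp d z u z" "bperp d z z u"
      unfolding bperp_def bjoin_def using zz by simp_all
  qed
  with orth show ?thesis by blast
qed

lemma partition_select:
  fixes cs :: "'b::comm_ring_1 list"
  assumes sum1: "sum_list cs = 1" and j: "j < length cs"
    and disj: "\<And>k. k < length cs \<Longrightarrow> k \<noteq> j \<Longrightarrow> p * cs ! k = 0"
  shows "p = p * cs ! j"
proof -
  have "p = (\<Sum>k=0..<length cs. p * cs ! k)"
    using sum1 by (simp add: sum_list_sum_nth sum_distrib_left[symmetric])
  also have "\<dots> = (\<Sum>k=0..<length cs. if k = j then p * cs ! j else 0)"
    by (rule sum.cong) (auto simp: disj)
  also have "\<dots> = p * cs ! j" using j by simp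
  finally show ?thesis .
qed

lemma orth_coeffs_partition:
  fixes as :: "'b::comm_ring_1 list"
  assumes idem: "\<And>a::'b. a * a = a" and pd: "pairwise_disj as"
  shows "pairwise_disj ((1 + sum_list as) # as)" "sum_list ((1 + sum_list as) # as) = 1"
proof -
  have head_disj: "(1 + sum_list as) * as ! j = 0" if j: "j < length as" for j
  proof -
    have "sum_list as * as ! j = (\<Sum>i=0..<length as. if i = j then as ! j else 0)"
      unfolding sum_list_sum_nth sum_distrib_right
      by (rule sum.cong) (use pd idem j in \<open>auto simp: pairwise_disj_def\<close>)
    also have "\<dots> = as ! j" using j by simp
    finally show ?thesis
      using idempotent_ring_add_self[OF idem, of "as ! j"] by (simp add: algebra_simps)
  qed
  show "pairwise_disj ((1 + sum_list as) # as)"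
    unfolding pairwise_disj_def
  proof (intro allI impI)
    fix i j
    assume "i < length ((1 + sum_list as) # as)" "j < length ((1 + sum_list as) # as)" "i \<noteq> j"
    then show "((1 + sum_list as) # as) ! i * ((1 + sum_list as) # as) ! j = 0"
      using pd head_disj unfolding pairwise_disj_def
      by (cases i; cases j) (auto simp: mult.commute)
  qed
  show "sum_list ((1 + sum_list as) # as) = 1"
    using idempotent_ring_add_self[OF idem, of "sum_list as"] by (simp add: algebra_simps)
qed

lemma orth_comb_iff:
  fixes d :: "'x \<Rightarrow> 'x \<Rightarrow> 'b::comm_ring_1"
  assumes idem: "\<And>a::'b. a * a = a" and pd: "pairwise_disj as"
    and len: "length as = length xs"
  shows "orth_comb d z x xs as \<longleftrightarrow>
           (1 + sum_list as) * d x z = 0 \<and> (\<forall>i<length xs. as ! i * d x (xs ! i) = 0)"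
proof -
  have "(\<forall>i<length (z # xs). ((1 + sum_list as) # as) ! i * d x ((z # xs) ! i) = 0) \<longleftrightarrow>
        (1 + sum_list as) * d x z = 0 \<and> (\<forall>i<length xs. as ! i * d x (xs ! i) = 0)"
    by (auto simp: All_less_Suc2 less_Suc_eq_0_disj)
  then show ?thesis
    using orth_coeffs_partition[OF idem pd] len
    unfolding orth_comb_def is_conv_comb_def by auto
qed

definition group_coeff :: "'x list \<Rightarrow> 'b::comm_ring_1 list \<Rightarrow> 'x \<Rightarrow> 'b" where
  "group_coeff ys bs w = (\<Sum>l=0..<length ys. if ys ! l = w then bs ! l else 0)"

lemma coeff_times_group_coeff:
  fixes bs :: "'b::comm_ring_1 list"
  assumes pd: "pairwise_disj bs" and len: "length ys = length bs" and l: "l < length ys"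
  shows "bs ! l * group_coeff ys bs w = (if ys ! l = w then bs ! l * bs ! l else 0)"
proof -
  have "bs ! l * group_coeff ys bs w
      = (\<Sum>k=0..<length ys. if k = l then (if ys ! l = w then bs ! l * bs ! l else 0) else 0)"
    unfolding group_coeff_def sum_distrib_left
    by (rule sum.cong) (use pd len l in \<open>auto simp: pairwise_disj_def\<close>)
  also have "\<dots> = (if ys ! l = w then bs ! l * bs ! l else 0)" using l by simp
  finally show ?thesis .
qed

lemma conv_comb_regroup:
  fixes d :: "'x \<Rightarrow> 'x \<Rightarrow> 'b::comm_ring_1"
  assumes cc: "is_conv_comb d x ys bs" and sub: "set ys \<subseteq> set ws" and dist: "distinct ws"
  shows "is_conv_comb d x ws (map (group_coeff ys bs) ws)"
proof -
  have len: "length ys = length bs" and pd: "pairwise_disj bs" and sum1: "sum_list bs = 1"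
    and vanish: "\<And>l. l < length ys \<Longrightarrow> bs ! l * d x (ys ! l) = 0"
    using cc unfolding is_conv_comb_def by auto
  have disj: "group_coeff ys bs u * group_coeff ys bs v = 0" if "u \<noteq> v" for u v
  proof -
    have "group_coeff ys bs u * group_coeff ys bs v
        = (\<Sum>l=0..<length ys. if ys ! l = u then bs ! l * group_coeff ys bs v else 0)"
      unfolding group_coeff_def[of ys bs u] sum_distrib_right by (rule sum.cong) auto
    also have "\<dots> = 0"
      using coeff_times_group_coeff[OF pd len] that by (intro sum.neutral) auto
    finally show ?thesis .
  qed
  have "sum_list (map (group_coeff ys bs) ws) = (\<Sum>w\<in>set ws. group_coeff ys bs w)"
    using dist by (simp add: sum_list_distinct_conv_sum_set)
  also have "\<dots> = (\<Sum>l=0..<length ys. \<Sum>w\<in>set ws. if ys ! l = w then bs ! l else 0)"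
    unfolding group_coeff_def by (rule sum.swap)
  also have "\<dots> = (\<Sum>l=0..<length ys. bs ! l)"
    using sub nth_mem by (intro sum.cong) fastforce+
  finally have sum_grouped: "sum_list (map (group_coeff ys bs) ws) = 1"
    using sum1 len by (simp add: sum_list_sum_nth)
  have vanish_grouped: "group_coeff ys bs w * d x w = 0" for w
    unfolding group_coeff_def sum_distrib_right
    by (intro sum.neutral) (use vanish in auto)
  show ?thesis
    unfolding is_conv_comb_def pairwise_disj_def
    using dist disj sum_grouped vanish_grouped by (auto simp: nth_eq_iff_index_eq)
qed

section \<open>Existence\<close>

lemma orth_comb_from_conv_comb:
  fixes d :: "'x \<Rightarrow> 'x \<Rightarrow> 'b::comm_ring_1"
  assumes idem: "\<And>a::'b. a * a = a" and bm: "bool_metric X d"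
    and zX: "z \<in> X" and xX: "x \<in> X" and xsX: "set xs \<subseteq> X"
    and cc: "is_conv_comb d x (z # xs) (c0 # cs)"
  defines "as \<equiv> map (\<lambda>i. cs ! i * d z (xs ! i)) [0..<length xs]"
  shows "pairwise_disj as \<and> orth_comb d z x xs as \<and>
         (\<forall>i<length xs. bleq (as ! i) (d z (xs ! i)))"
proof -
  let ?n = "length xs"
  have len: "length cs = ?n" and pd: "pairwise_disj (c0 # cs)"
    and sum1: "c0 + sum_list cs = 1"
    and vanish: "\<forall>i<Suc ?n. (c0 # cs) ! i * d x ((z # xs) ! i) = 0"
    using cc unfolding is_conv_comb_def by auto
  have vz: "c0 * d x z = 0" and vi: "\<And>i. i < ?n \<Longrightarrow> cs ! i * d x (xs ! i) = 0"
    using vanish unfolding All_less_Suc2 by auto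
  have las: "length as = ?n" unfolding as_def by simp
  have as_nth: "as ! i = cs ! i * d z (xs ! i)" if "i < ?n" for i
    using that unfolding as_def by simp
  have pd_as: "pairwise_disj as"
    unfolding pairwise_disj_def las
  proof (intro allI impI)
    fix i j assume "i < ?n" "j < ?n" "i \<noteq> j"
    moreover have "(c0 # cs) ! Suc i * (c0 # cs) ! Suc j = 0"
      using pd calculation len unfolding pairwise_disj_def
      by (metis Suc_less_eq length_Cons nat.inject)
    ultimately have "cs ! i * cs ! j = 0" by simp
    moreover have "as ! i * as ! j = (cs ! i * cs ! j) * (d z (xs ! i) * d z (xs ! j))"
      using \<open>i < ?n\<close> \<open>j < ?n\<close> by (simp add: as_nth mult_ac)
    ultimately show "as ! i * as ! j = 0" by simp
  qed
  have block_vanish: "cs ! i * (1 + d z (xs ! i)) * d x z = 0" if i: "i < ?n" for i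
    using i xsX by (intro masked_base_complement[OF idem bm xX _ zX vi[OF i]]) auto
  text \<open>Since 1 = c_0 + \<Sum>c_i, the base coefficient 1 + \<Sum>a_i splits into c_0 and
    the blocks c_i (1 + |x_i|), each of which avoids d(x,z).\<close>
  have "1 + sum_list as = c0 + (sum_list cs + sum_list as)"
    using sum1 by (simp add: algebra_simps)
  also have "\<dots> = c0 + (\<Sum>i=0..<?n. cs ! i * (1 + d z (xs ! i)))"
    by (simp add: sum_list_sum_nth len las as_nth distrib_left sum.distrib)
  finally have head: "(1 + sum_list as) * d x z = 0"
    using vz block_vanish by (simp add: distrib_right sum_distrib_right)
  have tail: "\<forall>i<?n. as ! i * d x (xs ! i) = 0"
  proof (intro allI impI)
    fix i assume i: "i < ?n"
    have "as ! i * d x (xs ! i) = d z (xs ! i) * (cs ! i * d x (xs ! i))"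
      using i by (simp add: as_nth mult_ac)
    then show "as ! i * d x (xs ! i) = 0" using vi[OF i] by simp
  qed
  have below: "\<forall>i<?n. bleq (as ! i) (d z (xs ! i))"
    by (simp add: bleq_def as_nth mult.assoc idem)
  show ?thesis
    using orth_comb_iff[OF idem pd_as las] pd_as head tail below by blast
qed

section \<open>Uniqueness\<close>

lemma orth_comb_coeff_below:
  fixes d :: "'x \<Rightarrow> 'x \<Rightarrow> 'b::comm_ring_1"
  assumes idem: "\<And>a::'b. a * a = a" and bm: "bool_metric X d"
    and zX: "z \<in> X" and xX: "x \<in> X" and xsX: "set xs \<subseteq> X" and dist: "distinct (z # xs)"
    and orth: "\<forall>u\<in>set (z # xs). \<forall>v\<in>set (z # xs). u \<noteq> v \<longrightarrow> bperp d z u v"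
    and oa: "orth_comb d z x xs as" and ob: "orth_comb d z x xs bs"
    and below: "bleq (as ! i) (d z (xs ! i))" and i: "i < length xs"
  shows "bleq (as ! i) (bs ! i)"
proof -
  let ?ws = "z # xs" and ?cs = "(1 + sum_list bs) # bs"
  have ccb: "is_conv_comb d x ?ws ?cs" using ob unfolding orth_comb_def by blast
  then have sum1: "sum_list ?cs = 1" and len: "length ?cs = length ?ws"
    and vanish_b: "\<And>k. k < length ?ws \<Longrightarrow> ?cs ! k * d x (?ws ! k) = 0"
    unfolding is_conv_comb_def by auto
  have vanish_a: "as ! i * d x (xs ! i) = 0"
    using oa i unfolding orth_comb_def is_conv_comb_def by (auto dest: spec[of _ "Suc i"])
  have wsX: "set ?ws \<subseteq> X" using zX xsX by simp
  have disj: "as ! i * ?cs ! k = 0" if k: "k < length ?cs" "k \<noteq> Suc i" for k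
  proof -
    let ?p = "as ! i * ?cs ! k"
    have xi: "xs ! i = ?ws ! Suc i" "Suc i < length ?ws" using i by simp_all
    have ne: "xs ! i \<noteq> ?ws ! k"
      using dist k len xi by (metis nth_eq_iff_index_eq)
    have mem: "xs ! i \<in> set ?ws" "?ws ! k \<in> set ?ws"
      using i k len nth_mem[of k ?ws] by simp_all
    have "?p * d (xs ! i) (?ws ! k) = 0"
    proof (rule masked_dist_zero[OF bm xX])
      have "?p * d x (xs ! i) = ?cs ! k * (as ! i * d x (xs ! i))" by (simp only: mult_ac)
      also have "\<dots> = 0" using vanish_a by simp
      finally show "?p * d x (xs ! i) = 0" .
      have "?p * d x (?ws ! k) = as ! i * (?cs ! k * d x (?ws ! k))" by (simp only: mult.assoc)
      also have "\<dots> = 0" using vanish_b[of k] k len by simp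
      finally show "?p * d x (?ws ! k) = 0" .
    qed (use mem wsX in auto)
    moreover have "d (xs ! i) (?ws ! k) = bjoin (d z (xs ! i)) (d z (?ws ! k))"
      using orth mem ne unfolding bperp_def by blast
    moreover have "bleq ?p (d z (xs ! i))"
    proof -
      have "?p * d z (xs ! i) = (as ! i * d z (xs ! i)) * ?cs ! k" by (simp only: mult_ac)
      also have "\<dots> = ?p" using below unfolding bleq_def by simp
      finally show ?thesis unfolding bleq_def .
    qed
    ultimately show ?thesis using bjoin_absorb_below[OF idem] by metis
  qed
  have "as ! i = as ! i * ?cs ! Suc i"
    by (rule partition_select[OF sum1]) (use i len disj in auto)
  then show ?thesis unfolding bleq_def by simp
qed

theorem mainTheorem11:
  fixes X :: "'x set" and d :: "'x \<Rightarrow> 'x \<Rightarrow> 'b::comm_ring_1"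
    and z :: 'x and xs :: "'x list" and x :: 'x
  assumes "\<And>a::'b. a * a = a"
    and "bool_metric X d" and "convex_bms X d"
    and "z \<in> X"
    and "distinct xs" and "referential X d z (set xs)"
    and "x \<in> X"
  shows "\<exists>!as. length as = length xs \<and>
           (\<forall>i<length as. \<forall>j<length as. i \<noteq> j \<longrightarrow> as ! i * as ! j = 0) \<and>
           orth_comb d z x xs as \<and>
           (\<forall>i<length xs. bleq (as ! i) (d z (xs ! i)))"
proof -
  note idem = assms(1) and bm = assms(2) and zX = assms(4) and xX = assms(7)
  have xsX: "set xs \<subseteq> X" and dist: "distinct (z # xs)"
    using assms(5,6) unfolding referential_def by auto
  have orth: "\<forall>u\<in>set (z # xs). \<forall>v\<in>set (z # xs). u \<noteq> v \<longrightarrow> bperp d z u v"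
    using referential_orthogonal_with_base[OF bm zX assms(6)] by simp
  have "\<exists>ys bs. set ys \<subseteq> set xs \<union> {z} \<and> is_conv_comb d x ys bs"
    using assms(6) xX unfolding referential_def by blast
  then obtain ys bs where ys: "set ys \<subseteq> set (z # xs)" and cc: "is_conv_comb d x ys bs"
    by auto
  have "is_conv_comb d x (z # xs) (group_coeff ys bs z # map (group_coeff ys bs) xs)"
    using conv_comb_regroup[OF cc ys dist] by simp
  then obtain as where as: "pairwise_disj as" "orth_comb d z x xs as"
      "\<forall>i<length xs. bleq (as ! i) (d z (xs ! i))"
    using orth_comb_from_conv_comb[OF idem bm zX xX xsX] by blast
  have unique: "bs = as" if bs: "orth_comb d z x xs bs" "\<forall>i<length xs. bleq (bs ! i) (d z (xs ! i))"
    for bs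
  proof (rule nth_equalityI)
    show len: "length bs = length as" using bs(1) as(2) unfolding orth_comb_def by simp
    show "bs ! i = as ! i" if i: "i < length bs" for i
    proof -
      have "i < length xs" using i bs(1) unfolding orth_comb_def by simp
      then have "bleq (bs ! i) (as ! i)" "bleq (as ! i) (bs ! i)"
        using orth_comb_coeff_below[OF idem bm zX xX xsX dist orth] as bs by blast+
      then show ?thesis unfolding bleq_def by (simp add: mult.commute)
    qed
  qed
  have "length as = length xs" using as(2) unfolding orth_comb_def by simp
  then show ?thesis
    using as unique unfolding pairwise_disj_def by (intro ex1I[of _ as]) blast+
qed

end
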